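(* Let $\mathfrak g$ be one of the complex simple Lie algebras $\mathfrak{sl}_3$, $\mathfrak{sp}_2$, or $\mathfrak g_2$, with a choice of positive roots $\Sigma^+$. Then, as a rational function, $$\sum_{\substack{\beta,\gamma\in\Sigma^+\\ \beta\neq\gamma}}\frac{\langle\beta,\gamma\rangle}{\beta\,\gamma}=0.$$
   Context: Roots are regarded as linear functions (on the real Cartan subspace, equivalently on its dual via the inner product), so $\frac{\langle\beta,\gamma\rangle}{\beta\gamma}$ is a rational function whose numerator is the constant $\langle\beta,\gamma\rangle$, the inner product on roots induced by the Killing form. *)

theory Defs
  imports "HOL-Analysis.Analysis"
begin

text \<open>Real Cartan subspace of a rank-2 simple Lie algebra, identified with its dual
  via the (Killing-induced) inner product: the Euclidean plane real^2.
  A root beta acts as the linear function x |-> beta \<bullet> x.\<close>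

definition vec2 :: "real \<Rightarrow> real \<Rightarrow> real^2" where
  "vec2 a b = (\<chi> i. if i = 1 then a else b)"

definition sym_set :: "(real^2) set \<Rightarrow> (real^2) set" where
  "sym_set S = S \<union> uminus ` S"

definition rootsA2 :: "(real^2) set" where
  "rootsA2 = sym_set {vec2 1 0, vec2 (1/2) (sqrt 3 / 2), vec2 (-1/2) (sqrt 3 / 2)}"

definition rootsC2 :: "(real^2) set" where
  "rootsC2 = sym_set {vec2 2 0, vec2 0 2, vec2 1 1, vec2 1 (-1)}"

definition rootsG2 :: "(real^2) set" where
  "rootsG2 = sym_set {vec2 1 0, vec2 (1/2) (sqrt 3 / 2), vec2 (-1/2) (sqrt 3 / 2),
                      vec2 0 (sqrt 3), vec2 (3/2) (sqrt 3 / 2), vec2 (3/2) (- sqrt 3 / 2)}"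

definition is_positive_system :: "(real^2) set \<Rightarrow> (real^2) set \<Rightarrow> bool" where
  "is_positive_system R P \<longleftrightarrow>
     (\<exists>v. (\<forall>\<alpha>\<in>R. \<alpha> \<bullet> v \<noteq> 0) \<and> P = {\<alpha>\<in>R. \<alpha> \<bullet> v > 0})"

end

theory Submission
  imports Defs
begin

text \<open>The sum only depends on the lines spanned by the roots, since every summand is
  homogeneous of degree 0 in \<open>\<beta>\<close> and in \<open>\<gamma>\<close>. Hence for any positive system it equals the
  sum over a fixed set of representatives of the roots modulo \<open>\<pm>1\<close>, and for the three rank 2
  root systems this is a rational identity in the coordinates of \<open>x\<close>, verified by clearing
  denominators.\<close>

definition inner_pair_sum :: "'a::real_inner set \<Rightarrow> 'a \<Rightarrow> real" where
  "inner_pair_sum S x =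
     (\<Sum>(\<beta>, \<gamma>)\<in>{(\<beta>, \<gamma>). \<beta> \<in> S \<and> \<gamma> \<in> S \<and> \<beta> \<noteq> \<gamma>}. (\<beta> \<bullet> \<gamma>) / ((\<beta> \<bullet> x) * (\<gamma> \<bullet> x)))"

lemma sum_distinct_pairs:
  fixes f :: "'a \<Rightarrow> 'a \<Rightarrow> 'b::ab_group_add"
  assumes "finite S"
  shows "(\<Sum>(\<beta>, \<gamma>)\<in>{(\<beta>, \<gamma>). \<beta> \<in> S \<and> \<gamma> \<in> S \<and> \<beta> \<noteq> \<gamma>}. f \<beta> \<gamma>)
    = (\<Sum>\<beta>\<in>S. \<Sum>\<gamma>\<in>S. f \<beta> \<gamma>) - (\<Sum>\<beta>\<in>S. f \<beta> \<beta>)"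
proof -
  have "{(\<beta>, \<gamma>). \<beta> \<in> S \<and> \<gamma> \<in> S \<and> \<beta> \<noteq> \<gamma>} = Sigma S (\<lambda>\<beta>. S - {\<beta>})"
    by auto
  then have "(\<Sum>(\<beta>, \<gamma>)\<in>{(\<beta>, \<gamma>). \<beta> \<in> S \<and> \<gamma> \<in> S \<and> \<beta> \<noteq> \<gamma>}. f \<beta> \<gamma>)
      = (\<Sum>\<beta>\<in>S. \<Sum>\<gamma>\<in>S - {\<beta>}. f \<beta> \<gamma>)"
    using assms by (simp add: sum.Sigma)
  also have "\<dots> = (\<Sum>\<beta>\<in>S. (\<Sum>\<gamma>\<in>S. f \<beta> \<gamma>) - f \<beta> \<beta>)"
    using assms by (intro sum.cong refl) (simp add: sum_diff1)
  finally show ?thesis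
    by (simp add: sum_subtractf)
qed

lemma inner_pair_sum_eq_inverses:
  fixes S :: "'a::real_inner set"
  assumes "finite S" and "\<forall>\<alpha>\<in>S. (\<alpha> \<bullet> x) * i \<alpha> = 1"
  shows "inner_pair_sum S x
    = (\<Sum>\<beta>\<in>S. \<Sum>\<gamma>\<in>S. (\<beta> \<bullet> \<gamma>) * i \<beta> * i \<gamma>) - (\<Sum>\<beta>\<in>S. (\<beta> \<bullet> \<beta>) * i \<beta> * i \<beta>)"
proof -
  have "inverse (\<alpha> \<bullet> x) = i \<alpha>" if "\<alpha> \<in> S" for \<alpha>
    using assms(2) that by (simp add: inverse_unique)
  then show ?thesis
    unfolding inner_pair_sum_def sum_distinct_pairs[OF assms(1)]
    by (simp add: divide_inverse mult.assoc)
qed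

text \<open>Keeping the inverses as opaque unknowns \<open>i \<alpha>\<close> turns the claim into an ideal membership
  problem that \<open>algebra\<close> can decide.\<close>
lemma inner_pair_sum_eq_0_by_inverses:
  fixes S :: "'a::real_inner set"
  assumes "finite S" and "\<forall>\<alpha>\<in>S. \<alpha> \<bullet> x \<noteq> 0"
    and "\<And>i. \<forall>\<alpha>\<in>S. (\<alpha> \<bullet> x) * i \<alpha> = 1 \<Longrightarrow>
      (\<Sum>\<beta>\<in>S. \<Sum>\<gamma>\<in>S. (\<beta> \<bullet> \<gamma>) * i \<beta> * i \<gamma>) - (\<Sum>\<beta>\<in>S. (\<beta> \<bullet> \<beta>) * i \<beta> * i \<beta>) = 0"
  shows "inner_pair_sum S x = 0"
proof -
  have inv: "\<forall>\<alpha>\<in>S. (\<alpha> \<bullet> x) * inverse (\<alpha> \<bullet> x) = 1"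
    using assms(2) by simp
  show ?thesis
    unfolding inner_pair_sum_eq_inverses[OF assms(1) inv] by (rule assms(3)[OF inv])
qed

lemma inner_pair_sum_rescale:
  fixes S :: "'a::real_inner set" and c :: "'a \<Rightarrow> real"
  assumes "\<forall>\<alpha>\<in>S. c \<alpha> \<noteq> 0" and inj: "inj_on (\<lambda>\<alpha>. c \<alpha> *\<^sub>R \<alpha>) S"
  shows "inner_pair_sum ((\<lambda>\<alpha>. c \<alpha> *\<^sub>R \<alpha>) ` S) x = inner_pair_sum S x"
proof -
  let ?g = "\<lambda>\<alpha>. c \<alpha> *\<^sub>R \<alpha>"
  let ?pairs = "\<lambda>T. {(\<beta>, \<gamma>). \<beta> \<in> T \<and> \<gamma> \<in> T \<and> \<beta> \<noteq> \<gamma>}"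
  have pairs: "?pairs (?g ` S) = map_prod ?g ?g ` ?pairs S"
    using inj unfolding inj_on_def by (auto simp: image_iff)
  have "inj_on (map_prod ?g ?g) (?pairs S)"
    using inj by (auto simp: inj_on_def)
  moreover have "(?g \<beta> \<bullet> ?g \<gamma>) / ((?g \<beta> \<bullet> x) * (?g \<gamma> \<bullet> x)) = (\<beta> \<bullet> \<gamma>) / ((\<beta> \<bullet> x) * (\<gamma> \<bullet> x))"
    if "\<beta> \<in> S" "\<gamma> \<in> S" for \<beta> \<gamma>
    using assms(1) that by simp
  ultimately show ?thesis
    unfolding inner_pair_sum_def pairs by (simp add: sum.reindex case_prod_beta)
qed

lemma positive_system_sym_set:
  assumes no_opp: "\<forall>\<alpha>\<in>S. \<forall>\<beta>\<in>S. \<alpha> \<noteq> - \<beta>" and "is_positive_system (sym_set S) P"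
  obtains c :: "real^2 \<Rightarrow> real"
  where "\<forall>\<alpha>\<in>S. c \<alpha> \<noteq> 0" "inj_on (\<lambda>\<alpha>. c \<alpha> *\<^sub>R \<alpha>) S" "P = (\<lambda>\<alpha>. c \<alpha> *\<^sub>R \<alpha>) ` S"
proof -
  obtain v where v: "\<forall>\<alpha>\<in>sym_set S. \<alpha> \<bullet> v \<noteq> 0" "P = {\<alpha>\<in>sym_set S. \<alpha> \<bullet> v > 0}"
    using assms(2) unfolding is_positive_system_def by blast
  define c where "c \<alpha> = (if \<alpha> \<bullet> v > 0 then 1 else - 1 :: real)" for \<alpha> :: "real^2"
  have "\<forall>\<alpha>\<in>S. c \<alpha> \<noteq> 0"
    by (simp add: c_def)
  moreover have "inj_on (\<lambda>\<alpha>. c \<alpha> *\<^sub>R \<alpha>) S"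
  proof (rule inj_onI)
    fix \<alpha> \<beta> assume "\<alpha> \<in> S" "\<beta> \<in> S" and "c \<alpha> *\<^sub>R \<alpha> = c \<beta> *\<^sub>R \<beta>"
    with no_opp v(1) show "\<alpha> = \<beta>"
      by (auto simp: c_def sym_set_def split: if_splits)
  qed
  moreover have "P = (\<lambda>\<alpha>. c \<alpha> *\<^sub>R \<alpha>) ` S"
  proof (intro equalityI subsetI)
    fix \<beta> assume "\<beta> \<in> P"
    then consider "\<beta> \<in> S" "\<beta> \<bullet> v > 0" | \<alpha> where "\<alpha> \<in> S" "\<beta> = - \<alpha>" "\<alpha> \<bullet> v < 0"
      unfolding v(2) sym_set_def by auto
    then obtain \<alpha> where "\<alpha> \<in> S" "\<beta> = c \<alpha> *\<^sub>R \<alpha>"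
      by cases (auto simp: c_def)
    then show "\<beta> \<in> (\<lambda>\<alpha>. c \<alpha> *\<^sub>R \<alpha>) ` S"
      by blast
  qed (use v in \<open>fastforce simp: c_def sym_set_def\<close>)
  ultimately show thesis
    using that by blast
qed

lemma inner_pair_sum_positive_system:
  assumes "\<forall>\<alpha>\<in>S. \<forall>\<beta>\<in>S. \<alpha> \<noteq> - \<beta>" and "is_positive_system (sym_set S) P"
    and nz: "\<forall>\<beta>\<in>P. \<beta> \<bullet> x \<noteq> 0"
  shows "\<forall>\<alpha>\<in>S. \<alpha> \<bullet> x \<noteq> 0" and "inner_pair_sum P x = inner_pair_sum S x"
proof -
  obtain c where c: "\<forall>\<alpha>\<in>S. c \<alpha> \<noteq> 0" "inj_on (\<lambda>\<alpha>. c \<alpha> *\<^sub>R \<alpha>) S"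
    and P: "P = (\<lambda>\<alpha>. c \<alpha> *\<^sub>R \<alpha>) ` S"
    using positive_system_sym_set[OF assms(1,2)] by blast
  show "\<forall>\<alpha>\<in>S. \<alpha> \<bullet> x \<noteq> 0"
    using nz unfolding P by auto
  show "inner_pair_sum P x = inner_pair_sum S x"
    unfolding P by (rule inner_pair_sum_rescale[OF c])
qed

lemma vec2_nth [simp]: "vec2 a b $ 1 = a" "vec2 a b $ 2 = b"
  by (simp_all add: vec2_def)

lemma vec2_eq_iff: "vec2 a b = vec2 c d \<longleftrightarrow> a = c \<and> b = d"
  by (metis vec2_nth vec_eq_iff exhaust_2)

lemma vec2_uminus: "- vec2 a b = vec2 (- a) (- b)"
  by (simp add: vec_eq_iff vec2_def)

lemma vec2_inner: "vec2 a b \<bullet> y = a * y $ 1 + b * y $ 2"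
  by (simp add: inner_vec_def UNIV_2)

lemma sqrt3_squared: "sqrt 3 * sqrt 3 = (3::real)"
  by simp

lemma inner_pair_sum_A2:
  fixes x :: "real^2"
  defines "S \<equiv> {vec2 1 0, vec2 (1/2) (sqrt 3 / 2), vec2 (-1/2) (sqrt 3 / 2)}"
  assumes "\<forall>\<alpha>\<in>S. \<alpha> \<bullet> x \<noteq> 0"
  shows "inner_pair_sum S x = 0"
  using assms(2) by (intro inner_pair_sum_eq_0_by_inverses)
    (simp_all add: S_def vec2_eq_iff vec2_inner,
      insert sqrt3_squared, elim conjE, simp add: field_simps, algebra)

lemma inner_pair_sum_C2:
  fixes x :: "real^2"
  defines "S \<equiv> {vec2 2 0, vec2 0 2, vec2 1 1, vec2 1 (-1)}"
  assumes "\<forall>\<alpha>\<in>S. \<alpha> \<bullet> x \<noteq> 0"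
  shows "inner_pair_sum S x = 0"
  using assms(2) by (intro inner_pair_sum_eq_0_by_inverses)
    (simp_all add: S_def vec2_eq_iff vec2_inner,
      elim conjE, simp add: field_simps, algebra)

lemma inner_pair_sum_G2:
  fixes x :: "real^2"
  defines "S \<equiv> {vec2 1 0, vec2 (1/2) (sqrt 3 / 2), vec2 (-1/2) (sqrt 3 / 2),
                vec2 0 (sqrt 3), vec2 (3/2) (sqrt 3 / 2), vec2 (3/2) (- sqrt 3 / 2)}"
  assumes "\<forall>\<alpha>\<in>S. \<alpha> \<bullet> x \<noteq> 0"
  shows "inner_pair_sum S x = 0"
  using assms(2) by (intro inner_pair_sum_eq_0_by_inverses)
    (simp_all add: S_def vec2_eq_iff vec2_inner,
      insert sqrt3_squared, elim conjE, simp add: field_simps, algebra)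

theorem mainTheorem16:
  fixes R P :: "(real^2) set" and x :: "real^2"
  assumes "R \<in> {rootsA2, rootsC2, rootsG2}"
    and "is_positive_system R P"
    and "\<forall>\<beta>\<in>P. \<beta> \<bullet> x \<noteq> 0"
  shows "(\<Sum>(\<beta>, \<gamma>)\<in>{(\<beta>, \<gamma>). \<beta> \<in> P \<and> \<gamma> \<in> P \<and> \<beta> \<noteq> \<gamma>}.
            (\<beta> \<bullet> \<gamma>) / ((\<beta> \<bullet> x) * (\<gamma> \<bullet> x))) = 0"
proof -
  have reduce: "inner_pair_sum P x = 0"
    if "R = sym_set S" and "\<forall>\<alpha>\<in>S. \<forall>\<beta>\<in>S. \<alpha> \<noteq> - \<beta>"
      and "(\<forall>\<alpha>\<in>S. \<alpha> \<bullet> x \<noteq> 0) \<Longrightarrow> inner_pair_sum S x = 0" for S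
    using inner_pair_sum_positive_system[of S P x] assms(2,3) that by simp
  from assms(1) consider "R = rootsA2" | "R = rootsC2" | "R = rootsG2"
    by blast
  then have "inner_pair_sum P x = 0"
  proof cases
    case 1
    show ?thesis
      by (rule reduce[OF 1[unfolded rootsA2_def]])
        (simp add: vec2_uminus vec2_eq_iff, rule inner_pair_sum_A2)
  next
    case 2
    show ?thesis
      by (rule reduce[OF 2[unfolded rootsC2_def]])
        (simp add: vec2_uminus vec2_eq_iff, rule inner_pair_sum_C2)
  next
    case 3
    show ?thesis
      by (rule reduce[OF 3[unfolded rootsG2_def]])
        (simp add: vec2_uminus vec2_eq_iff, rule inner_pair_sum_G2)
  qed
  then show ?thesis
    unfolding inner_pair_sum_def .
qed

end
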